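(* Let $n \geq 4$, let $A$ be an $n\times n$ real matrix with $\mathrm{Tr}(AA^t)=n$, let $O$ be Haar distributed on $O(n,\mathbb{R})$, and for $t>0$ let $O'$ be obtained from $O$ by running the heat kernel on $O(n,\mathbb{R})$ for time $t$. Let $W = \mathrm{Tr}(AO)$ and $W' = \mathrm{Tr}(AO')$. Then, as $t \to 0$: (1) $\mathbb{E}(W'-W)^2 = t(n-1) + O(t^2)$; (2) $\mathbb{E}(W'-W)^4 = O(t^2)$; (3) $\mathbb{E}|W'-W|^3 = O(t^{3/2})$.
   Context: The Laplacian on $O(n,\mathbb{R})$ is $\Delta = \frac12\sum_{1\le i<j\le n} X_{ij}^2$, where $X_{ij}$ is the left-invariant vector field $X_{ij}f(O) = \frac{d}{ds}\big|_{s=0} f(O e^{s(E_{ij}-E_{ji})})$ and $E_{ij}$ are the matrix units. The heat kernel $K(t,x,y)$ is the kernel of $e^{t\Delta}$ with respect to Haar measure: $(e^{t\Delta}\phi)(x) = \int K(t,x,y)\phi(y)\,dy$; it is nonnegative, symmetric and integrates to $1$ in $y$. "Running the heat kernel for time $t$" means $O'$ has conditional law $K(t,O,y)\,dy$ given $O$, so $\mathbb{E}[\phi(O')\mid O] = (e^{t\Delta}\phi)(O)$. *)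

theory Defs
  imports "HOL-Analysis.Analysis" "HOL-Probability.Probability" "HOL-Library.Landau_Symbols"
begin

text \<open>The one-parameter subgroup exp(s(E_ij - E_ji)) written out explicitly:
  the identity except for entries (i,i)=(j,j)=cos s, (i,j)=sin s, (j,i)=-sin s (i \<noteq> j).\<close>
definition rot :: "'n::finite \<Rightarrow> 'n \<Rightarrow> real \<Rightarrow> real^'n^'n" where
  "rot i j s = (\<chi> k l.
      if k = i \<and> l = i then cos s
      else if k = j \<and> l = j then cos s
      else if k = i \<and> l = j then sin s
      else if k = j \<and> l = i then - sin s
      else if k = l then 1 else 0)"

definition Xsq :: "'n::finite \<Rightarrow> 'n \<Rightarrow> (real^'n^'n \<Rightarrow> real) \<Rightarrow> real^'n^'n \<Rightarrow> real" where
  "Xsq i j f Q = deriv (deriv (\<lambda>s. f (Q ** rot i j s))) 0"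

text \<open>Laplacian 1/2 sum_{i<j} X_ij^2; since X_ji = -X_ij, this equals 1/4 sum_{i \<noteq> j} X_ij^2.\<close>
definition laplacian :: "(real^'n::finite^'n \<Rightarrow> real) \<Rightarrow> real^'n^'n \<Rightarrow> real" where
  "laplacian f Q = (1/4) * (\<Sum>(i,j)\<in>{(i,j). i \<noteq> j}. Xsq i j f Q)"

definition Orth :: "(real^'n::finite^'n) set" where
  "Orth = {Q. orthogonal_matrix Q}"

text \<open>Haar probability measure on O(n): a probability measure on the Borel sets of the
  matrix space, concentrated on O(n), invariant under left translation by O(n)
  (this characterises Haar measure uniquely).\<close>
definition haar_measure :: "(real^'n::finite^'n) measure \<Rightarrow> bool" where
  "haar_measure M \<longleftrightarrow> prob_space M \<and> sets M = sets borel \<and> measure M Orth = 1 \<and>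
     (\<forall>g\<in>Orth. distr M M (\<lambda>x. g ** x) = M)"

text \<open>Monomials in the matrix entries; their linear span is the algebra of polynomial
  functions, dense in C(O(n)), so they determine the heat semigroup.\<close>
definition monomial_fun :: "(real^'n::finite^'n \<Rightarrow> real) \<Rightarrow> bool" where
  "monomial_fun f \<longleftrightarrow> (\<exists>m a b. f = (\<lambda>x. \<Prod>k<(m::nat). x $ a k $ b k))"

definition heat_kernel :: "(real^'n::finite^'n) measure \<Rightarrow>
    (real \<Rightarrow> real^'n^'n \<Rightarrow> real^'n^'n \<Rightarrow> real) \<Rightarrow> bool" where
  "heat_kernel M K \<longleftrightarrow>
     (\<forall>t>0. (\<lambda>(x,y). K t x y) \<in> borel_measurable (M \<Otimes>\<^sub>M M)) \<and>
     (\<forall>t>0. \<forall>x\<in>Orth. \<forall>y\<in>Orth. K t x y \<ge> 0 \<and> K t x y = K t y x) \<and>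
     (\<forall>t>0. \<forall>x\<in>Orth. integrable M (K t x) \<and> (\<integral>y. K t x y \<partial>M) = 1) \<and>
     (\<forall>\<phi>. monomial_fun \<phi> \<longrightarrow> (\<forall>x\<in>Orth.
        (\<forall>t>0. ((\<lambda>s. \<integral>y. K s x y * \<phi> y \<partial>M) has_real_derivative
                   (\<integral>y. K t x y * laplacian \<phi> y \<partial>M)) (at t)) \<and>
        ((\<lambda>s. \<integral>y. K s x y * \<phi> y \<partial>M) \<longlongrightarrow> \<phi> x) (at_right 0)))"

end

theory Submission
  imports Defs
begin

text \<open>
  Write \<open>W = tr(A O)\<close>. For a polynomial \<open>\<phi>\<close> in the matrix entries the heat semigroup satisfies
  \<open>e\<^sup>t\<^sup>\<Delta>\<phi> = \<phi> + t \<Delta>\<phi> + O(t\<^sup>2)\<close> uniformly on \<open>O(n)\<close>, because \<open>\<Delta>\<close> preserves polynomials and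
  polynomials are bounded on the compact group. Applied to \<open>\<phi>(y) = (W(y) - W(x))\<^sup>k\<close> at the
  point \<open>x\<close>, where \<open>\<phi>\<close> vanishes, this gives \<open>E[(W' - W)\<^sup>k | O = x] = t \<Delta>\<phi>(x) + O(t\<^sup>2)\<close>.
  Since \<open>X\<^sub>i\<^sub>j\<close> is a derivation, \<open>\<Delta>\<phi>(x) = 0\<close> for \<open>k = 4\<close>, and for \<open>k = 2\<close> it is
  \<open>|\<nabla>W|\<^sup>2(x) = \<Sum>\<^sub>i\<^sub><\<^sub>j (X\<^sub>i\<^sub>jW)\<^sup>2(x)\<close>, a quadratic form in the entries of \<open>x\<close>. The second
  moments of Haar measure, \<open>E[O\<^sub>b\<^sub>c O\<^sub>d\<^sub>e] = \<delta>\<^sub>b\<^sub>d \<delta>\<^sub>c\<^sub>e / n\<close> (from invariance under sign changes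
  and permutations of rows), together with \<open>tr(A A\<^sup>t) = n\<close> give \<open>E |\<nabla>W|\<^sup>2 = n - 1\<close>.
  The third absolute moment is bounded by the second and fourth through
  \<open>|d|\<^sup>3 \<le> (\<surd>t/2) d\<^sup>2 + d\<^sup>4/(2\<surd>t)\<close>.
\<close>

section \<open>Polynomial functions of the matrix entries\<close>

inductive entry_poly :: "(real^'n::finite^'n \<Rightarrow> real) \<Rightarrow> bool" where
  entry_poly_monomial: "monomial_fun f \<Longrightarrow> entry_poly f"
| entry_poly_add: "entry_poly f \<Longrightarrow> entry_poly g \<Longrightarrow> entry_poly (\<lambda>x. f x + g x)"
| entry_poly_scale: "entry_poly f \<Longrightarrow> entry_poly (\<lambda>x. c * f x)"

lemma prod_lessThan_add:
  "(\<Prod>k<m+m'. (c::nat\<Rightarrow>real) k) = (\<Prod>k<m. c k) * (\<Prod>k<m'. c (m+k))"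
  by (induction m') (auto simp: mult.assoc)

lemma monomial_fun_mult:
  fixes f g :: "real^'n::finite^'n \<Rightarrow> real"
  assumes "monomial_fun f" "monomial_fun g"
  shows "monomial_fun (\<lambda>x. f x * g x)"
proof -
  obtain m and a b :: "nat \<Rightarrow> 'n" where f: "f = (\<lambda>x. \<Prod>k<m. x $ a k $ b k)"
    using assms(1) unfolding monomial_fun_def by blast
  obtain m' and a' b' :: "nat \<Rightarrow> 'n" where g: "g = (\<lambda>x. \<Prod>k<m'. x $ a' k $ b' k)"
    using assms(2) unfolding monomial_fun_def by blast
  define a2 where "a2 = (\<lambda>k. if k < m then a k else a' (k - m))"
  define b2 where "b2 = (\<lambda>k. if k < m then b k else b' (k - m))"
  have "(\<lambda>x. f x * g x) = (\<lambda>x. \<Prod>k<m+m'. x $ a2 k $ b2 k)"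
    by (simp add: f g prod_lessThan_add a2_def b2_def)
  thus ?thesis unfolding monomial_fun_def by blast
qed

lemma monomial_fun_one: "monomial_fun (\<lambda>x. 1)"
  unfolding monomial_fun_def by (rule exI[of _ 0]) auto

lemma monomial_fun_entry: "monomial_fun (\<lambda>x. x $ a $ b)"
  unfolding monomial_fun_def by (rule exI[of _ 1]) auto

lemma entry_poly_const: "entry_poly (\<lambda>x. c)"
  using entry_poly_scale[OF entry_poly_monomial[OF monomial_fun_one], of c] by simp

lemma entry_poly_entry: "entry_poly (\<lambda>x. x $ a $ b)"
  by (rule entry_poly_monomial[OF monomial_fun_entry])

lemma entry_poly_mult_monomial:
  assumes "entry_poly g" "monomial_fun f"
  shows "entry_poly (\<lambda>x. f x * g x)"
  using assms(1)
proof induction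
  case (entry_poly_monomial g)
  thus ?case by (intro entry_poly.entry_poly_monomial monomial_fun_mult assms(2))
next
  case (entry_poly_add g1 g2)
  have "(\<lambda>x. f x * (g1 x + g2 x)) = (\<lambda>x. f x * g1 x + f x * g2 x)"
    by (simp add: algebra_simps)
  thus ?case using entry_poly_add by (simp add: entry_poly.entry_poly_add)
next
  case (entry_poly_scale g c)
  have "(\<lambda>x. f x * (c * g x)) = (\<lambda>x. c * (f x * g x))" by (simp add: algebra_simps)
  thus ?case using entry_poly_scale by (simp add: entry_poly.entry_poly_scale)
qed

lemma entry_poly_mult:
  assumes "entry_poly f" "entry_poly g"
  shows "entry_poly (\<lambda>x. f x * g x)"
  using assms(1)
proof induction
  case (entry_poly_monomial f)
  thus ?case by (intro entry_poly_mult_monomial assms(2))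
next
  case (entry_poly_add f1 f2)
  have "(\<lambda>x. (f1 x + f2 x) * g x) = (\<lambda>x. f1 x * g x + f2 x * g x)" by (simp add: algebra_simps)
  thus ?case using entry_poly_add by (simp add: entry_poly.entry_poly_add)
next
  case (entry_poly_scale f c)
  have "(\<lambda>x. (c * f x) * g x) = (\<lambda>x. c * (f x * g x))" by (simp add: algebra_simps)
  thus ?case using entry_poly_scale by (simp add: entry_poly.entry_poly_scale)
qed

lemma entry_poly_uminus: "entry_poly f \<Longrightarrow> entry_poly (\<lambda>x. - f x)"
  using entry_poly_scale[of f "-1"] by simp

lemma entry_poly_diff: "entry_poly f \<Longrightarrow> entry_poly g \<Longrightarrow> entry_poly (\<lambda>x. f x - g x)"
  using entry_poly_add[OF _ entry_poly_uminus, of f g] by simp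

lemma entry_poly_power: "entry_poly f \<Longrightarrow> entry_poly (\<lambda>x. f x ^ k)"
  by (induction k) (auto intro: entry_poly_const entry_poly_mult)

lemma entry_poly_sum:
  "(\<And>i. i \<in> I \<Longrightarrow> entry_poly (f i)) \<Longrightarrow> entry_poly (\<lambda>x. \<Sum>i\<in>I. f i x)"
proof (induction I rule: infinite_finite_induct)
  case (insert i I)
  thus ?case using entry_poly_add[of "f i" "\<lambda>x. \<Sum>i\<in>I. f i x"] by simp
qed (auto intro: entry_poly_const)

lemma trace_matrix_mult_eq: "trace (A ** y) = (\<Sum>a\<in>UNIV. \<Sum>b\<in>UNIV. A$a$b * y$b$a)"
  by (simp add: trace_def matrix_matrix_mult_def)

lemma entry_poly_trace_mult: "entry_poly (\<lambda>y::real^'n::finite^'n. trace (A ** y))"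
  unfolding trace_matrix_mult_eq by (intro entry_poly_sum entry_poly_scale entry_poly_entry)

lemma orthogonal_matrix_entry_abs_le:
  assumes "orthogonal_matrix (Q::real^'n::finite^'n)"
  shows "\<bar>Q $ a $ b\<bar> \<le> 1"
proof -
  have "(Q ** transpose Q) $ a $ a = 1"
    using assms unfolding orthogonal_matrix_def by (simp add: mat_def)
  hence row: "(\<Sum>k\<in>UNIV. Q $ a $ k * Q $ a $ k) = 1"
    by (simp add: matrix_matrix_mult_def transpose_def)
  have "Q $ a $ b * Q $ a $ b \<le> (\<Sum>k\<in>UNIV. Q $ a $ k * Q $ a $ k)"
    by (rule member_le_sum) auto
  hence "\<bar>Q $ a $ b\<bar>^2 \<le> 1^2" using row by (simp add: power2_eq_square)
  thus ?thesis by (rule power2_le_imp_le) simp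
qed

lemma entry_poly_bounded_on_Orth:
  fixes f :: "real^'n::finite^'n \<Rightarrow> real"
  assumes "entry_poly f"
  shows "\<exists>B. \<forall>Q\<in>Orth. \<bar>f Q\<bar> \<le> B"
  using assms
proof induction
  case (entry_poly_monomial f)
  then obtain m and a b :: "nat \<Rightarrow> 'n" where f: "f = (\<lambda>x. \<Prod>k<m. x $ a k $ b k)"
    unfolding monomial_fun_def by blast
  have "\<bar>f Q\<bar> \<le> 1" if "Q \<in> Orth" for Q
    using that unfolding f abs_prod Orth_def
    by (intro prod_le_1) (auto intro: orthogonal_matrix_entry_abs_le)
  thus ?case by blast
next
  case (entry_poly_add f g)
  then obtain B1 B2 where "\<forall>Q\<in>Orth. \<bar>f Q\<bar> \<le> B1" "\<forall>Q\<in>Orth. \<bar>g Q\<bar> \<le> B2" by blast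
  hence "\<forall>Q\<in>Orth. \<bar>f Q + g Q\<bar> \<le> B1 + B2"
    by (meson abs_triangle_ineq add_mono order_trans)
  thus ?case by blast
next
  case (entry_poly_scale f c)
  then obtain B where "\<forall>Q\<in>Orth. \<bar>f Q\<bar> \<le> B" by blast
  hence "\<forall>Q\<in>Orth. \<bar>c * f Q\<bar> \<le> \<bar>c\<bar> * B" by (simp add: abs_mult mult_left_mono)
  thus ?case by blast
qed

lemma entry_poly_continuous_on:
  "entry_poly (f :: real^'n::finite^'n \<Rightarrow> real) \<Longrightarrow> continuous_on UNIV f"
proof (induction rule: entry_poly.induct)
  case (entry_poly_monomial f)
  then obtain m and a b :: "nat \<Rightarrow> 'n" where f: "f = (\<lambda>x. \<Prod>k<m. x $ a k $ b k)"
    unfolding monomial_fun_def by blast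
  show ?case unfolding f by (intro continuous_intros)
qed (auto intro: continuous_intros)

lemma entry_poly_borel_measurable: "entry_poly f \<Longrightarrow> f \<in> borel_measurable borel"
  by (intro borel_measurable_continuous_onI entry_poly_continuous_on)

section \<open>Derivatives along the rotation subgroups\<close>

lemma rot_nth:
  "rot i j s $ k $ l = (if k = i \<and> l = i then cos s
      else if k = j \<and> l = j then cos s
      else if k = i \<and> l = j then sin s
      else if k = j \<and> l = i then - sin s
      else if k = l then 1 else 0)"
  unfolding rot_def by (simp only: vec_lambda_beta)

lemma rot_zero: "rot i j 0 = mat 1"
proof -
  have mat_one_nth: "(mat 1 :: real^'a::finite^'a) $ k $ l = (if k = l then 1 else 0)" for k l
    by (simp add: mat_def)
  have "rot i j 0 $ k $ l = mat 1 $ k $ l" for k l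
    unfolding rot_nth mat_one_nth
    by (cases "k=i"; cases "l=i"; cases "k=j"; cases "l=j"; simp del: cos_zero sin_zero; simp)
  thus ?thesis by (simp add: vec_eq_iff)
qed

lemma sum_if_two_points:
  fixes x y :: "'n::finite \<Rightarrow> real"
  assumes "i \<noteq> j"
  shows "(\<Sum>m\<in>UNIV. (if m = i then x m else if m = j then y m else 0)) = x i + y j"
proof -
  have "(\<Sum>m\<in>UNIV. (if m = i then x m else if m = j then y m else 0))
      = (\<Sum>m\<in>UNIV. (if m = i then x m else 0) + (if m = j then y m else 0))"
    by (rule sum.cong) (use assms in auto)
  also have "\<dots> = x i + y j" by (simp add: sum.distrib)
  finally show ?thesis .
qed

lemma matrix_mult_rot_nth:
  fixes Q :: "real^'n::finite^'n"
  assumes "i \<noteq> j"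
  shows "(Q ** rot i j s) $ a $ b =
    (if b = i then Q$a$i * cos s - Q$a$j * sin s
     else if b = j then Q$a$i * sin s + Q$a$j * cos s else Q$a$b)"
proof -
  have prod: "(Q ** rot i j s) $ a $ b = (\<Sum>m\<in>UNIV. Q$a$m * rot i j s $ m $ b)"
    by (simp add: matrix_matrix_mult_def)
  consider "b = i" | "b = j" | "b \<noteq> i" "b \<noteq> j" by blast
  thus ?thesis
  proof cases
    case 1
    have "(\<Sum>m\<in>UNIV. Q$a$m * rot i j s $ m $ b)
       = (\<Sum>m\<in>UNIV. (if m = i then Q$a$m * cos s else if m = j then Q$a$m * (- sin s) else 0))"
      by (rule sum.cong) (use assms 1 in \<open>auto simp: rot_nth\<close>)
    thus ?thesis using prod 1 assms by (simp add: sum_if_two_points)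
  next
    case 2
    have "(\<Sum>m\<in>UNIV. Q$a$m * rot i j s $ m $ b)
       = (\<Sum>m\<in>UNIV. (if m = i then Q$a$m * sin s else if m = j then Q$a$m * cos s else 0))"
      by (rule sum.cong) (use assms 2 in \<open>auto simp: rot_nth\<close>)
    thus ?thesis using prod 2 assms by (simp add: sum_if_two_points)
  next
    case 3
    have "(\<Sum>m\<in>UNIV. Q$a$m * rot i j s $ m $ b) = (\<Sum>m\<in>UNIV. (if m = b then Q$a$m else 0))"
      by (rule sum.cong) (use 3 in \<open>auto simp: rot_nth\<close>)
    thus ?thesis using prod 3 by simp
  qed
qed

definition has_rot_deriv ::
    "'n::finite \<Rightarrow> 'n \<Rightarrow> (real^'n^'n \<Rightarrow> real) \<Rightarrow> (real^'n^'n \<Rightarrow> real) \<Rightarrow> bool" where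
  "has_rot_deriv i j f g \<longleftrightarrow>
     (\<forall>Q s. ((\<lambda>s. f (Q ** rot i j s)) has_real_derivative g (Q ** rot i j s)) (at s))"

definition rot_deriv :: "'n::finite \<Rightarrow> 'n \<Rightarrow> (real^'n^'n \<Rightarrow> real) \<Rightarrow> real^'n^'n \<Rightarrow> real" where
  "rot_deriv i j f Q = deriv (\<lambda>s. f (Q ** rot i j s)) 0"

definition rot_deriv_entry :: "'n::finite \<Rightarrow> 'n \<Rightarrow> 'n \<Rightarrow> 'n \<Rightarrow> real^'n^'n \<Rightarrow> real" where
  "rot_deriv_entry i j a b P = (if b = j then P$a$i else 0) - (if b = i then P$a$j else 0)"

lemma has_rot_deriv_entry:
  fixes i j :: "'n::finite"
  assumes "i \<noteq> j"
  shows "has_rot_deriv i j (\<lambda>x. x $ a $ b) (rot_deriv_entry i j a b)"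
  unfolding has_rot_deriv_def rot_deriv_entry_def matrix_mult_rot_nth[OF assms]
  using assms by (auto intro!: derivative_eq_intros)

lemma has_rot_deriv_const: "has_rot_deriv i j (\<lambda>x. c) (\<lambda>x. 0)"
  unfolding has_rot_deriv_def by (auto intro!: derivative_eq_intros)

lemma has_rot_deriv_add:
  "has_rot_deriv i j f f' \<Longrightarrow> has_rot_deriv i j g g' \<Longrightarrow>
   has_rot_deriv i j (\<lambda>x. f x + g x) (\<lambda>x. f' x + g' x)"
  unfolding has_rot_deriv_def by (auto intro!: derivative_eq_intros)

lemma has_rot_deriv_scale:
  "has_rot_deriv i j f f' \<Longrightarrow> has_rot_deriv i j (\<lambda>x. c * f x) (\<lambda>x. c * f' x)"
  unfolding has_rot_deriv_def by (auto intro!: derivative_eq_intros)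

lemma has_rot_deriv_mult:
  "has_rot_deriv i j f f' \<Longrightarrow> has_rot_deriv i j g g' \<Longrightarrow>
   has_rot_deriv i j (\<lambda>x. f x * g x) (\<lambda>x. f' x * g x + f x * g' x)"
  unfolding has_rot_deriv_def by (auto intro!: derivative_eq_intros)

lemma has_rot_deriv_sum:
  "(\<And>k. k \<in> I \<Longrightarrow> has_rot_deriv i j (f k) (f' k)) \<Longrightarrow>
   has_rot_deriv i j (\<lambda>x. \<Sum>k\<in>I. f k x) (\<lambda>x. \<Sum>k\<in>I. f' k x)"
proof (induction I rule: infinite_finite_induct)
  case (insert k I)
  thus ?case using has_rot_deriv_add[of i j "f k" "f' k"] by simp
qed (simp_all add: has_rot_deriv_const)

lemma entry_poly_rot_deriv_entry: "entry_poly (rot_deriv_entry i j a b)"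
proof -
  have "rot_deriv_entry i j a b
      = (\<lambda>x. (if b = j then x$a$i else 0) - (if b = i then x$a$j else 0))"
    by (simp add: rot_deriv_entry_def[abs_def])
  thus ?thesis
    by (cases "b = j"; cases "b = i") (auto intro!: entry_poly_diff entry_poly_uminus entry_poly_entry entry_poly_const)
qed

lemma has_rot_deriv_monomial:
  fixes a b :: "nat \<Rightarrow> 'n::finite"
  assumes "i \<noteq> j"
  shows "\<exists>g. entry_poly g \<and> has_rot_deriv i j (\<lambda>x. \<Prod>k<m. x $ a k $ b k) g"
proof (induction m)
  case 0
  thus ?case using has_rot_deriv_const[of i j 1] entry_poly_const[of 0] by auto
next
  case (Suc m)
  then obtain g where g: "entry_poly g" "has_rot_deriv i j (\<lambda>x. \<Prod>k<m. x $ a k $ b k) g"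
    by blast
  have "has_rot_deriv i j (\<lambda>x. (\<Prod>k<m. x $ a k $ b k) * x $ a m $ b m)
     (\<lambda>x. g x * x $ a m $ b m + (\<Prod>k<m. x $ a k $ b k) * rot_deriv_entry i j (a m) (b m) x)"
    by (rule has_rot_deriv_mult[OF g(2) has_rot_deriv_entry[OF assms]])
  moreover have "entry_poly (\<lambda>x. g x * x $ a m $ b m
                   + (\<Prod>k<m. x $ a k $ b k) * rot_deriv_entry i j (a m) (b m) x)"
    by (intro entry_poly_add entry_poly_mult g(1) entry_poly_entry entry_poly_rot_deriv_entry
        entry_poly_monomial) (auto simp: monomial_fun_def)
  ultimately show ?case by auto
qed

lemma entry_poly_has_rot_deriv:
  fixes f :: "real^'n::finite^'n \<Rightarrow> real"
  assumes "entry_poly f" "i \<noteq> j"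
  shows "\<exists>g. entry_poly g \<and> has_rot_deriv i j f g"
  using assms(1)
proof induction
  case (entry_poly_monomial f)
  then obtain m and a b :: "nat \<Rightarrow> 'n" where "f = (\<lambda>x. \<Prod>k<m. x $ a k $ b k)"
    unfolding monomial_fun_def by blast
  thus ?case using has_rot_deriv_monomial[OF assms(2)] by simp
next
  case (entry_poly_add f g)
  thus ?case by (blast intro: entry_poly.entry_poly_add has_rot_deriv_add)
next
  case (entry_poly_scale f c)
  thus ?case by (blast intro: entry_poly.entry_poly_scale has_rot_deriv_scale)
qed

lemma has_rot_deriv_imp_rot_deriv:
  assumes "has_rot_deriv i j f g"
  shows "rot_deriv i j f = g"
proof
  fix Q
  have "((\<lambda>s. f (Q ** rot i j s)) has_real_derivative g (Q ** rot i j 0)) (at 0)"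
    using assms unfolding has_rot_deriv_def by blast
  thus "rot_deriv i j f Q = g Q" unfolding rot_deriv_def by (simp add: DERIV_imp_deriv rot_zero)
qed

lemma Xsq_eq_of_has_rot_deriv:
  assumes f: "has_rot_deriv i j f g" and g: "has_rot_deriv i j g g2"
  shows "Xsq i j f Q = g2 Q"
proof -
  have "deriv (\<lambda>s. f (Q ** rot i j s)) = (\<lambda>s. g (Q ** rot i j s))"
    using f unfolding has_rot_deriv_def by (auto intro!: ext DERIV_imp_deriv)
  moreover have "((\<lambda>s. g (Q ** rot i j s)) has_real_derivative g2 (Q ** rot i j 0)) (at 0)"
    using g unfolding has_rot_deriv_def by blast
  hence "deriv (\<lambda>s. g (Q ** rot i j s)) 0 = g2 Q" by (simp add: DERIV_imp_deriv rot_zero)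
  ultimately show ?thesis unfolding Xsq_def by simp
qed

lemma entry_poly_rot_deriv:
  assumes "entry_poly f" "i \<noteq> j"
  shows "entry_poly (rot_deriv i j f)" "has_rot_deriv i j f (rot_deriv i j f)"
  using entry_poly_has_rot_deriv[OF assms] has_rot_deriv_imp_rot_deriv by metis+

lemma Xsq_entry_poly:
  assumes "entry_poly f" "i \<noteq> j"
  shows "Xsq i j f = rot_deriv i j (rot_deriv i j f)"
  using Xsq_eq_of_has_rot_deriv entry_poly_rot_deriv assms by blast

section \<open>The Laplacian on polynomials\<close>

lemma laplacian_entry_poly_eq:
  fixes f :: "real^'n::finite^'n \<Rightarrow> real"
  assumes "entry_poly f"
  shows "laplacian f
    = (\<lambda>Q. (1/4) * (\<Sum>(i,j)\<in>{(i,j). i \<noteq> j}. rot_deriv i j (rot_deriv i j f) Q))"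
  unfolding laplacian_def
  by (intro ext arg_cong[where f="\<lambda>x. (1/4) * x"] sum.cong refl)
     (auto simp: Xsq_entry_poly[OF assms])

lemma entry_poly_laplacian:
  fixes f :: "real^'n::finite^'n \<Rightarrow> real"
  assumes "entry_poly f"
  shows "entry_poly (laplacian f)"
  unfolding laplacian_entry_poly_eq[OF assms] case_prod_beta
  by (intro entry_poly_scale entry_poly_sum)
     (auto intro: entry_poly_rot_deriv assms)

lemma rot_deriv_add:
  assumes "entry_poly f" "entry_poly g" "i \<noteq> j"
  shows "rot_deriv i j (\<lambda>x. f x + g x) = (\<lambda>x. rot_deriv i j f x + rot_deriv i j g x)"
  by (intro has_rot_deriv_imp_rot_deriv has_rot_deriv_add entry_poly_rot_deriv assms)

lemma rot_deriv_scale: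
  assumes "entry_poly f" "i \<noteq> j"
  shows "rot_deriv i j (\<lambda>x. c * f x) = (\<lambda>x. c * rot_deriv i j f x)"
  by (intro has_rot_deriv_imp_rot_deriv has_rot_deriv_scale entry_poly_rot_deriv assms)

lemma laplacian_add:
  fixes f g :: "real^'n::finite^'n \<Rightarrow> real"
  assumes "entry_poly f" "entry_poly g"
  shows "laplacian (\<lambda>x. f x + g x) = (\<lambda>x. laplacian f x + laplacian g x)"
proof -
  have "rot_deriv i j (rot_deriv i j (\<lambda>x. f x + g x))
      = (\<lambda>x. rot_deriv i j (rot_deriv i j f) x + rot_deriv i j (rot_deriv i j g) x)"
    if "i \<noteq> j" for i j :: 'n
    using that assms by (simp add: rot_deriv_add entry_poly_rot_deriv)
  hence "(\<Sum>(i,j)\<in>{(i,j). i \<noteq> j}. rot_deriv i j (rot_deriv i j (\<lambda>x. f x + g x)) Q)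
      = (\<Sum>(i,j)\<in>{(i,j::'n). i \<noteq> j}.
           rot_deriv i j (rot_deriv i j f) Q + rot_deriv i j (rot_deriv i j g) Q)" for Q
    by (intro sum.cong) auto
  thus ?thesis
    unfolding laplacian_entry_poly_eq[OF assms(1)] laplacian_entry_poly_eq[OF assms(2)]
      laplacian_entry_poly_eq[OF entry_poly_add[OF assms]]
    by (simp add: sum.distrib case_prod_beta algebra_simps)
qed

lemma laplacian_scale:
  fixes f :: "real^'n::finite^'n \<Rightarrow> real"
  assumes "entry_poly f"
  shows "laplacian (\<lambda>x. c * f x) = (\<lambda>x. c * laplacian f x)"
proof -
  have "rot_deriv i j (rot_deriv i j (\<lambda>x. c * f x)) = (\<lambda>x. c * rot_deriv i j (rot_deriv i j f) x)"
    if "i \<noteq> j" for i j :: 'n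
    using that assms by (simp add: rot_deriv_scale entry_poly_rot_deriv)
  hence "(\<Sum>(i,j)\<in>{(i,j). i \<noteq> j}. rot_deriv i j (rot_deriv i j (\<lambda>x. c * f x)) Q)
      = (\<Sum>(i,j)\<in>{(i,j::'n). i \<noteq> j}. c * rot_deriv i j (rot_deriv i j f) Q)" for Q
    by (intro sum.cong) auto
  thus ?thesis
    unfolding laplacian_entry_poly_eq[OF assms] laplacian_entry_poly_eq[OF entry_poly_scale[OF assms]]
    by (simp add: sum_distrib_left case_prod_beta algebra_simps)
qed

lemma laplacian_const: "laplacian (\<lambda>x::real^'n::finite^'n. c) = (\<lambda>x. 0)"
  unfolding laplacian_def Xsq_def by simp

lemma laplacian_sum:
  fixes f :: "'i \<Rightarrow> real^'n::finite^'n \<Rightarrow> real"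
  assumes "finite I" "\<And>i. i \<in> I \<Longrightarrow> entry_poly (f i)"
  shows "laplacian (\<lambda>x. \<Sum>i\<in>I. f i x) = (\<lambda>x. \<Sum>i\<in>I. laplacian (f i) x)"
  using assms
proof (induction I rule: finite_induct)
  case empty
  thus ?case by (simp add: laplacian_const)
next
  case (insert k I)
  have "laplacian (\<lambda>x. \<Sum>i\<in>insert k I. f i x) = laplacian (\<lambda>x. f k x + (\<Sum>i\<in>I. f i x))"
    using insert by simp
  also have "\<dots> = (\<lambda>x. laplacian (f k) x + laplacian (\<lambda>x. \<Sum>i\<in>I. f i x) x)"
    by (rule laplacian_add) (use insert in \<open>auto intro: entry_poly_sum\<close>)
  finally show ?case using insert by simp
qed

section \<open>Powers of the trace increment under the Laplacian\<close>

definition trace_rot_deriv :: "real^'n::finite^'n \<Rightarrow> 'n \<Rightarrow> 'n \<Rightarrow> real^'n^'n \<Rightarrow> real" where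
  "trace_rot_deriv A i j y = (\<Sum>a\<in>UNIV. \<Sum>b\<in>UNIV. A$a$b * rot_deriv_entry i j b a y)"

text \<open>\<open>|\<nabla>W|\<^sup>2 = \<Sum>\<^sub>i\<^sub><\<^sub>j (X\<^sub>i\<^sub>jW)\<^sup>2\<close> for \<open>W = tr(A \<cdot>)\<close>, written over ordered pairs using \<open>X\<^sub>j\<^sub>i = -X\<^sub>i\<^sub>j\<close>.\<close>
definition trace_grad_sq :: "real^'n::finite^'n \<Rightarrow> real^'n^'n \<Rightarrow> real" where
  "trace_grad_sq A x = (1/2) * (\<Sum>(i,j)\<in>{(i,j). i \<noteq> j}. (trace_rot_deriv A i j x)^2)"

lemma entry_poly_trace_rot_deriv: "entry_poly (trace_rot_deriv A i j)"
  unfolding trace_rot_deriv_def[abs_def]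
  by (intro entry_poly_sum entry_poly_scale entry_poly_rot_deriv_entry)

lemma entry_poly_trace_grad_sq: "entry_poly (trace_grad_sq A)"
  unfolding trace_grad_sq_def[abs_def] case_prod_beta
  by (intro entry_poly_scale entry_poly_sum entry_poly_power entry_poly_trace_rot_deriv)

lemma has_rot_deriv_trace_increment:
  fixes A :: "real^'n::finite^'n"
  assumes "i \<noteq> j"
  shows "has_rot_deriv i j (\<lambda>y. trace (A ** y) - w) (trace_rot_deriv A i j)"
proof -
  have "has_rot_deriv i j (\<lambda>y. (\<Sum>a\<in>UNIV. \<Sum>b\<in>UNIV. A$a$b * y$b$a) + (- w))
          (\<lambda>y. (\<Sum>a\<in>UNIV. \<Sum>b\<in>UNIV. A$a$b * rot_deriv_entry i j b a y) + 0)"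
    by (intro has_rot_deriv_add has_rot_deriv_sum has_rot_deriv_scale has_rot_deriv_entry
        has_rot_deriv_const assms)
  thus ?thesis by (simp add: trace_matrix_mult_eq trace_rot_deriv_def[abs_def])
qed

lemma Xsq_square:
  assumes f: "has_rot_deriv i j f g" and g: "has_rot_deriv i j g g2"
  shows "Xsq i j (\<lambda>y. f y * f y) Q = 2 * (g Q)^2 + 2 * f Q * g2 Q"
proof -
  have "has_rot_deriv i j (\<lambda>y. f y * f y) (\<lambda>y. g y * f y + f y * g y)"
    by (rule has_rot_deriv_mult[OF f f])
  moreover have "has_rot_deriv i j (\<lambda>y. g y * f y + f y * g y)
     (\<lambda>y. (g2 y * f y + g y * g y) + (g y * g y + f y * g2 y))"
    by (intro has_rot_deriv_add has_rot_deriv_mult f g)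
  ultimately show ?thesis
    using Xsq_eq_of_has_rot_deriv by (fastforce simp: power2_eq_square algebra_simps)
qed

text \<open>Both identities below hold only at the base point \<open>x\<close>, where the increment vanishes
  and the second-order terms of \<open>Xsq_square\<close> drop out.\<close>

lemma laplacian_trace_increment_sq:
  fixes A :: "real^'n::finite^'n"
  shows "laplacian (\<lambda>y. (trace (A ** y) - trace (A ** x))^2) x = trace_grad_sq A x"
proof -
  have "Xsq i j (\<lambda>y. (trace (A ** y) - trace (A ** x))^2) x = 2 * (trace_rot_deriv A i j x)^2"
    if ij: "i \<noteq> j" for i j
  proof -
    obtain g2 where "has_rot_deriv i j (trace_rot_deriv A i j) g2"
      using entry_poly_has_rot_deriv[OF entry_poly_trace_rot_deriv ij] by blast
    from Xsq_square[OF has_rot_deriv_trace_increment[OF ij] this, where Q=x]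
    show ?thesis by (simp add: power2_eq_square)
  qed
  hence "(\<Sum>(i,j)\<in>{(i,j). i \<noteq> j}. Xsq i j (\<lambda>y. (trace (A ** y) - trace (A ** x))^2) x)
      = (\<Sum>(i,j)\<in>{(i,j::'n). i \<noteq> j}. 2 * (trace_rot_deriv A i j x)^2)"
    by (intro sum.cong) auto
  thus ?thesis
    unfolding laplacian_def trace_grad_sq_def by (simp add: sum_distrib_left[symmetric] case_prod_beta)
qed

lemma laplacian_trace_increment_pow4:
  fixes A :: "real^'n::finite^'n"
  shows "laplacian (\<lambda>y. (trace (A ** y) - trace (A ** x))^4) x = 0"
proof -
  let ?\<psi> = "\<lambda>y. trace (A ** y) - trace (A ** x)"
  let ?f = "\<lambda>y. ?\<psi> y * ?\<psi> y"
  have "Xsq i j (\<lambda>y. (trace (A ** y) - trace (A ** x))^4) x = 0" if ij: "i \<noteq> j" for i j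
  proof -
    let ?G = "\<lambda>y. trace_rot_deriv A i j y * ?\<psi> y + ?\<psi> y * trace_rot_deriv A i j y"
    have f: "has_rot_deriv i j ?f ?G"
      by (rule has_rot_deriv_mult[OF has_rot_deriv_trace_increment[OF ij]
            has_rot_deriv_trace_increment[OF ij]])
    have "entry_poly ?G"
      by (intro entry_poly_add entry_poly_mult entry_poly_trace_rot_deriv entry_poly_diff
          entry_poly_trace_mult entry_poly_const)
    then obtain G2 where "has_rot_deriv i j ?G G2"
      using entry_poly_has_rot_deriv ij by blast
    from Xsq_square[OF f this, where Q=x]
    have "Xsq i j (\<lambda>y. ?f y * ?f y) x = 0" by simp
    moreover have "(\<lambda>y. ?f y * ?f y) = (\<lambda>y. (trace (A ** y) - trace (A ** x))^4)"
      by (simp add: fun_eq_iff power4_eq_xxxx algebra_simps)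
    ultimately show ?thesis by simp
  qed
  thus ?thesis unfolding laplacian_def by (simp add: case_prod_beta)
qed

lemma laplacian_laplacian_trace_increment_pow_bounded:
  fixes A :: "real^'n::finite^'n"
  shows "\<exists>C. \<forall>x\<in>Orth. \<forall>Q\<in>Orth.
           \<bar>laplacian (laplacian (\<lambda>y. (trace (A ** y) - trace (A ** x))^k)) Q\<bar> \<le> C"
proof -
  define W where "W = (\<lambda>y::real^'n^'n. trace (A ** y))"
  have W_pow: "entry_poly (\<lambda>y. W y ^ j)" for j
    unfolding W_def by (intro entry_poly_power entry_poly_trace_mult)
  obtain C0 where C0: "\<forall>Q\<in>Orth. \<bar>W Q\<bar> \<le> C0"
    using entry_poly_bounded_on_Orth[OF W_pow[of 1]] by auto
  have "\<forall>j. \<exists>B. \<forall>Q\<in>Orth. \<bar>laplacian (laplacian (\<lambda>y. W y ^ j)) Q\<bar> \<le> B"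
    using entry_poly_bounded_on_Orth[OF entry_poly_laplacian[OF entry_poly_laplacian[OF W_pow]]]
    by blast
  then obtain B where B: "\<And>j Q. Q \<in> Orth \<Longrightarrow> \<bar>laplacian (laplacian (\<lambda>y. W y ^ j)) Q\<bar> \<le> B j"
    by metis
  show ?thesis
  proof (intro exI[of _ "\<Sum>j\<le>k. real (k choose j) * C0^(k-j) * \<bar>B j\<bar>"] ballI)
    fix x Q :: "real^'n^'n"
    assume x: "x \<in> Orth" and Q: "Q \<in> Orth"
    define c where "c = (\<lambda>j. real (k choose j) * (- W x)^(k-j))"
    have "(\<lambda>y. (trace (A ** y) - trace (A ** x))^k) = (\<lambda>y. \<Sum>j\<le>k. c j * W y ^ j)"
      unfolding W_def c_def by (intro ext) (simp only: diff_conv_add_uminus binomial_ring ac_simps)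
    moreover have "laplacian (laplacian (\<lambda>y. \<Sum>j\<le>k. c j * W y ^ j))
        = (\<lambda>y. \<Sum>j\<le>k. c j * laplacian (laplacian (\<lambda>y. W y ^ j)) y)"
      using W_pow
      by (simp add: laplacian_sum laplacian_scale entry_poly_scale entry_poly_laplacian)
    moreover have "\<bar>c j * laplacian (laplacian (\<lambda>y. W y ^ j)) Q\<bar>
        \<le> real (k choose j) * C0^(k-j) * \<bar>B j\<bar>" for j
    proof -
      have "\<bar>c j\<bar> \<le> real (k choose j) * C0^(k-j)"
        unfolding c_def abs_mult using C0 x by (auto simp: power_abs intro!: mult_left_mono power_mono)
      moreover have "\<bar>laplacian (laplacian (\<lambda>y. W y ^ j)) Q\<bar> \<le> \<bar>B j\<bar>"
        using B[OF Q, of j] by linarith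
      ultimately show ?thesis unfolding abs_mult by (intro mult_mono) auto
    qed
    ultimately show "\<bar>laplacian (laplacian (\<lambda>y. (trace (A ** y) - trace (A ** x))^k)) Q\<bar>
        \<le> (\<Sum>j\<le>k. real (k choose j) * C0^(k-j) * \<bar>B j\<bar>)"
      by (simp add: order_trans[OF sum_abs] sum_mono)
  qed
qed

section \<open>Second moments of Haar measure\<close>

definition trace_rot_deriv_coeff :: "real^'n::finite^'n \<Rightarrow> 'n \<Rightarrow> 'n \<Rightarrow> 'n \<times> 'n \<Rightarrow> real" where
  "trace_rot_deriv_coeff A i j p =
     (if snd p = i then A$j$(fst p) else 0) - (if snd p = j then A$i$(fst p) else 0)"

lemma sum_if_eq_row:
  "(\<Sum>a\<in>(UNIV::'n::finite set). \<Sum>b\<in>(UNIV::'m::finite set). if a = j then (F a b::real) else 0)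
   = (\<Sum>b\<in>UNIV. F j b)"
proof -
  have "(\<Sum>a\<in>(UNIV::'n set). \<Sum>b\<in>(UNIV::'m set). if a = j then F a b else 0)
      = (\<Sum>a\<in>(UNIV::'n set). if a = j then (\<Sum>b\<in>UNIV. F a b) else 0)"
    by (intro sum.cong) auto
  thus ?thesis by simp
qed

lemma sum_pairs_eq_double_sum:
  "(\<Sum>p\<in>UNIV. (F::'m::finite \<times> 'n::finite \<Rightarrow> real) p) = (\<Sum>b\<in>UNIV. \<Sum>c\<in>UNIV. F (b, c))"
  unfolding UNIV_Times_UNIV[symmetric] sum.cartesian_product' by simp

lemma trace_rot_deriv_eq_linear_form:
  fixes A :: "real^'n::finite^'n"
  shows "trace_rot_deriv A i j y = (\<Sum>p\<in>UNIV. trace_rot_deriv_coeff A i j p * y $ fst p $ snd p)"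
proof -
  have "A$a$b * ((if a = j then y$b$i else 0) - (if a = i then y$b$j else 0))
      = (if a = j then A$a$b * y$b$i else 0) - (if a = i then A$a$b * y$b$j else 0)" for a b
    by simp
  hence "trace_rot_deriv A i j y
      = (\<Sum>a\<in>UNIV. \<Sum>b\<in>UNIV. if a = j then A$a$b * y$b$i else 0)
        - (\<Sum>a\<in>UNIV. \<Sum>b\<in>UNIV. if a = i then A$a$b * y$b$j else 0)"
    by (simp only: trace_rot_deriv_def rot_deriv_entry_def sum_subtractf)
  also have "\<dots> = (\<Sum>b\<in>UNIV. A$j$b * y$b$i) - (\<Sum>b\<in>UNIV. A$i$b * y$b$j)"
    by (simp only: sum_if_eq_row)
  also have "\<dots> = (\<Sum>b\<in>UNIV. \<Sum>c\<in>UNIV. trace_rot_deriv_coeff A i j (b, c) * y$b$c)"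
  proof -
    have "trace_rot_deriv_coeff A i j (b, c) * y$b$c
        = (if c = i then A$j$b * y$b$c else 0) - (if c = j then A$i$b * y$b$c else 0)" for b c
      by (simp add: trace_rot_deriv_coeff_def)
    thus ?thesis by (simp add: sum_subtractf)
  qed
  finally show ?thesis by (simp add: sum_pairs_eq_double_sum)
qed

lemma sum_trace_rot_deriv_coeff_sq:
  fixes A :: "real^'n::finite^'n"
  assumes "i \<noteq> j"
  shows "(\<Sum>p\<in>UNIV. (trace_rot_deriv_coeff A i j p)^2)
       = (\<Sum>b\<in>UNIV. (A$j$b)^2) + (\<Sum>b\<in>UNIV. (A$i$b)^2)"
proof -
  have "(trace_rot_deriv_coeff A i j (b,c))^2
      = (if c = i then (A$j$b)^2 else 0) + (if c = j then (A$i$b)^2 else 0)" for b c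
    using assms by (simp add: trace_rot_deriv_coeff_def power2_eq_square)
  thus ?thesis by (simp add: sum_pairs_eq_double_sum sum.distrib)
qed

lemma sum_offdiag_pairs:
  fixes r :: "'n::finite \<Rightarrow> real"
  shows "(\<Sum>p\<in>{(i,j). i \<noteq> j}. r (snd p) + r (fst p)) = 2 * (real CARD('n) - 1) * (\<Sum>i\<in>UNIV. r i)"
proof -
  have pairs: "{(i,j). i \<noteq> j} = Sigma (UNIV::'n set) (\<lambda>i. UNIV - {i})" by auto
  have card: "real (card (UNIV - {i::'n})) = real CARD('n) - 1" for i
    by (simp add: card_Diff_singleton of_nat_diff Suc_leI)
  have "(\<Sum>p\<in>{(i,j). i \<noteq> j}. r (snd p) + r (fst p)) = (\<Sum>i\<in>UNIV. \<Sum>j\<in>UNIV - {i}. r j + r i)"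
    unfolding pairs by (subst sum.Sigma) (auto simp: case_prod_beta)
  also have "\<dots> = (\<Sum>i\<in>UNIV. ((\<Sum>j\<in>UNIV. r j) - r i) + (real CARD('n) - 1) * r i)"
    by (simp add: sum.distrib sum_diff1 card)
  also have "\<dots> = real CARD('n) * (\<Sum>i\<in>UNIV. r i) - (\<Sum>i\<in>UNIV. r i)
                   + (real CARD('n) - 1) * (\<Sum>i\<in>UNIV. r i)"
    by (simp add: sum.distrib sum_subtractf sum_distrib_left)
  also have "\<dots> = 2 * (real CARD('n) - 1) * (\<Sum>i\<in>UNIV. r i)"
    by (simp add: algebra_simps)
  finally show ?thesis .
qed

definition diag_matrix :: "('n::finite \<Rightarrow> real) \<Rightarrow> real^'n^'n" where
  "diag_matrix d = (\<chi> k l. if k = l then d k else 0)"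

lemma diag_matrix_mult_nth: "(diag_matrix d ** y) $ k $ l = d k * y$k$l"
proof -
  have "(diag_matrix d ** y) $ k $ l = (\<Sum>m\<in>UNIV. (if k = m then d k * y$m$l else 0))"
    unfolding matrix_matrix_mult_def diag_matrix_def vec_lambda_beta by (intro sum.cong) auto
  thus ?thesis by simp
qed

lemma diag_matrix_in_Orth:
  assumes "\<And>k. d k * d k = 1"
  shows "diag_matrix d \<in> Orth"
proof -
  have "transpose (diag_matrix d) = diag_matrix d"
    by (simp add: vec_eq_iff transpose_def diag_matrix_def)
  moreover have "diag_matrix d ** diag_matrix d = mat 1"
    by (simp add: vec_eq_iff diag_matrix_mult_nth mat_def) (simp add: diag_matrix_def assms)
  ultimately show ?thesis unfolding Orth_def orthogonal_matrix by simp
qed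

definition perm_matrix :: "('n::finite \<Rightarrow> 'n) \<Rightarrow> real^'n^'n" where
  "perm_matrix \<sigma> = (\<chi> k l. if l = \<sigma> k then 1 else 0)"

lemma perm_matrix_mult_nth: "(perm_matrix \<sigma> ** y) $ k $ l = y $ (\<sigma> k) $ l"
proof -
  have "(perm_matrix \<sigma> ** y) $ k $ l = (\<Sum>m\<in>UNIV. (if m = \<sigma> k then y$m$l else 0))"
    unfolding matrix_matrix_mult_def perm_matrix_def vec_lambda_beta by (intro sum.cong) auto
  thus ?thesis by simp
qed

lemma perm_matrix_in_Orth:
  assumes "\<And>k. \<sigma> (\<sigma> k) = k"
  shows "perm_matrix \<sigma> \<in> Orth"
proof -
  have "transpose (perm_matrix \<sigma>) = perm_matrix \<sigma>"
    by (simp add: vec_eq_iff transpose_def perm_matrix_def) (metis assms)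
  moreover have "perm_matrix \<sigma> ** perm_matrix \<sigma> = mat 1"
    by (simp add: vec_eq_iff perm_matrix_mult_nth mat_def) (simp add: perm_matrix_def assms eq_commute)
  ultimately show ?thesis unfolding Orth_def orthogonal_matrix by simp
qed

context
  fixes M :: "(real^'n::finite^'n) measure"
  assumes haar: "haar_measure M"
begin

lemma haar_prob_space: "prob_space M"
  using haar unfolding haar_measure_def by blast

lemma sets_haar: "sets M = sets borel"
  using haar unfolding haar_measure_def by blast

lemma AE_haar_Orth: "AE x in M. x \<in> Orth"
  using haar prob_space.AE_prob_1[OF haar_prob_space] unfolding haar_measure_def by blast

lemma entry_poly_haar_measurable: "entry_poly f \<Longrightarrow> f \<in> borel_measurable M"
  using entry_poly_borel_measurable measurable_cong_sets[OF sets_haar refl] by blast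

lemma entry_poly_haar_integrable:
  assumes "entry_poly f"
  shows "integrable M f"
proof -
  interpret prob_space M by (rule haar_prob_space)
  obtain B where "\<forall>Q\<in>Orth. \<bar>f Q\<bar> \<le> B" using entry_poly_bounded_on_Orth[OF assms] by blast
  thus ?thesis
    using AE_haar_Orth entry_poly_haar_measurable[OF assms]
    by (intro integrable_const_bound[where B=B]) auto
qed

lemma haar_integral_left_mult:
  fixes f :: "real^'n^'n \<Rightarrow> real"
  assumes g: "g \<in> Orth" and f: "f \<in> borel_measurable borel"
  shows "(\<integral>y. f (g ** y) \<partial>M) = (\<integral>y. f y \<partial>M)"
proof -
  have "continuous_on UNIV (\<lambda>x::real^'n^'n. g ** x)"
    unfolding matrix_matrix_mult_def by (intro continuous_on_vec_lambda continuous_intros)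
  hence "(\<lambda>x. g ** x) \<in> M \<rightarrow>\<^sub>M M"
    using borel_measurable_continuous_onI measurable_cong_sets[OF sets_haar sets_haar] by blast
  moreover have "f \<in> borel_measurable M" using f measurable_cong_sets[OF sets_haar refl] by blast
  ultimately have "(\<integral>y. f y \<partial>(distr M M (\<lambda>x. g ** x))) = (\<integral>y. f (g ** y) \<partial>M)"
    by (rule integral_distr)
  moreover have "distr M M (\<lambda>x. g ** x) = M" using haar g unfolding haar_measure_def by blast
  ultimately show ?thesis by simp
qed

lemma haar_integral_entry_mult_offdiag:
  assumes "b \<noteq> d"
  shows "(\<integral>y. y$b$c * y$d$e \<partial>M) = 0"
proof -
  define g where "g = diag_matrix (\<lambda>k::'n. if k = b then -1 else 1)"
  have "(\<integral>y. (g ** y)$b$c * (g ** y)$d$e \<partial>M) = (\<integral>y. y$b$c * y$d$e \<partial>M)"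
    unfolding g_def
    by (intro haar_integral_left_mult diag_matrix_in_Orth entry_poly_borel_measurable
        entry_poly_mult entry_poly_entry) auto
  moreover have "(\<lambda>y. (g ** y)$b$c * (g ** y)$d$e) = (\<lambda>y. - (y$b$c * y$d$e))"
    using assms by (simp add: g_def diag_matrix_mult_nth)
  ultimately show ?thesis by simp
qed

lemma haar_integral_entry_mult_row_indep:
  "(\<integral>y. y$b$c * y$b$e \<partial>M) = (\<integral>y. y$b'$c * y$b'$e \<partial>M)"
proof -
  define \<sigma> where "\<sigma> = (\<lambda>k::'n. if k = b then b' else if k = b' then b else k)"
  have "(\<integral>y. (perm_matrix \<sigma> ** y)$b$c * (perm_matrix \<sigma> ** y)$b$e \<partial>M) = (\<integral>y. y$b$c * y$b$e \<partial>M)"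
    unfolding \<sigma>_def
    by (intro haar_integral_left_mult perm_matrix_in_Orth entry_poly_borel_measurable
        entry_poly_mult entry_poly_entry) auto
  thus ?thesis by (simp add: \<sigma>_def perm_matrix_mult_nth)
qed

lemma haar_integral_entry_mult_diag:
  "(\<integral>y. y$b$c * y$b$e \<partial>M) = (if c = e then 1 else 0) / real CARD('n)"
proof -
  interpret prob_space M by (rule haar_prob_space)
  have columns: "AE y in M. (\<Sum>b'\<in>UNIV. y$b'$c * y$b'$e) = (if c = e then 1 else 0)"
    using AE_haar_Orth
  proof eventually_elim
    case (elim y)
    hence "(transpose y ** y) $ c $ e = (mat 1 :: real^'n^'n) $ c $ e"
      unfolding Orth_def orthogonal_matrix by simp
    thus ?case by (simp add: matrix_matrix_mult_def transpose_def mat_def)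
  qed
  have "(\<Sum>b'\<in>UNIV. \<integral>y. y$b'$c * y$b'$e \<partial>M) = (\<Sum>b'\<in>(UNIV::'n set). \<integral>y. y$b$c * y$b$e \<partial>M)"
    by (intro sum.cong refl haar_integral_entry_mult_row_indep)
  hence "real CARD('n) * (\<integral>y. y$b$c * y$b$e \<partial>M) = (\<Sum>b'\<in>UNIV. \<integral>y. y$b'$c * y$b'$e \<partial>M)"
    by simp
  also have "\<dots> = (\<integral>y. (\<Sum>b'\<in>UNIV. y$b'$c * y$b'$e) \<partial>M)"
    by (intro Bochner_Integration.integral_sum[symmetric] entry_poly_haar_integrable
        entry_poly_mult entry_poly_entry)
  also have "\<dots> = (\<integral>y. (if c = e then 1 else 0) \<partial>M)"
  proof (rule integral_cong_AE[OF _ _ columns])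
    show "(\<lambda>y. \<Sum>b'\<in>UNIV. y$b'$c * y$b'$e) \<in> borel_measurable M"
      by (intro entry_poly_haar_measurable entry_poly_sum entry_poly_mult entry_poly_entry)
  qed simp
  also have "\<dots> = (if c = e then 1 else 0)" by (simp add: prob_space)
  finally show ?thesis by (simp add: field_simps)
qed

lemma haar_integral_entry_mult:
  "(\<integral>y. y$b$c * y$d$e \<partial>M) = (if b = d \<and> c = e then 1 / real CARD('n) else 0)"
  by (cases "b = d")
     (auto simp: haar_integral_entry_mult_offdiag haar_integral_entry_mult_diag)

lemma haar_integral_linear_form_sq:
  fixes \<alpha> :: "'n \<times> 'n \<Rightarrow> real"
  shows "(\<integral>y. (\<Sum>p\<in>UNIV. \<alpha> p * y $ fst p $ snd p)^2 \<partial>M) = (\<Sum>p\<in>UNIV. (\<alpha> p)^2) / real CARD('n)"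
proof -
  have int: "integrable M (\<lambda>y. c * (y $ b $ b' * y $ d $ d'))" for c b b' d d'
    by (intro entry_poly_haar_integrable entry_poly_scale entry_poly_mult entry_poly_entry)
  have "(\<Sum>p\<in>UNIV. \<alpha> p * y $ fst p $ snd p)^2
      = (\<Sum>p\<in>UNIV. \<Sum>q\<in>UNIV. (\<alpha> p * \<alpha> q) * (y $ fst p $ snd p * y $ fst q $ snd q))" for y
    unfolding power2_eq_square sum_product by (simp add: algebra_simps)
  hence "(\<integral>y. (\<Sum>p\<in>UNIV. \<alpha> p * y $ fst p $ snd p)^2 \<partial>M)
     = (\<Sum>p\<in>UNIV. \<Sum>q\<in>UNIV. \<integral>y. (\<alpha> p * \<alpha> q) * (y $ fst p $ snd p * y $ fst q $ snd q) \<partial>M)"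
    using int by (simp add: Bochner_Integration.integral_sum integrable_sum)
  also have "\<dots> = (\<Sum>p\<in>UNIV. \<Sum>q\<in>UNIV. (\<alpha> p * \<alpha> q) * (if p = q then 1 / real CARD('n) else 0))"
    by (intro sum.cong refl) (auto simp: haar_integral_entry_mult prod_eq_iff)
  also have "\<dots> = (\<Sum>p\<in>UNIV. (\<alpha> p)^2) / real CARD('n)"
    by (simp add: power2_eq_square if_distrib sum_divide_distrib cong: if_cong)
  finally show ?thesis .
qed

lemma haar_integral_trace_grad_sq:
  fixes A :: "real^'n^'n"
  assumes "trace (A ** transpose A) = real CARD('n)"
  shows "(\<integral>x. trace_grad_sq A x \<partial>M) = real CARD('n) - 1"
proof -
  let ?n = "real CARD('n)"
  define r where "r = (\<lambda>i. \<Sum>b\<in>UNIV. (A$i$b)^2)"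
  have "(\<Sum>i\<in>UNIV. r i) = ?n"
    using assms by (simp add: r_def trace_def matrix_matrix_mult_def transpose_def power2_eq_square)
  moreover have "(\<integral>x. (trace_rot_deriv A (fst p) (snd p) x)^2 \<partial>M) = (r (snd p) + r (fst p)) / ?n"
    if "p \<in> {(i,j). i \<noteq> j}" for p
    using that
    by (cases p) (simp add: trace_rot_deriv_eq_linear_form haar_integral_linear_form_sq
        sum_trace_rot_deriv_coeff_sq r_def)
  moreover have "integrable M (\<lambda>x. (trace_rot_deriv A (fst p) (snd p) x)^2)" for p
    by (intro entry_poly_haar_integrable entry_poly_power entry_poly_trace_rot_deriv)
  ultimately show ?thesis
    by (simp add: trace_grad_sq_def case_prod_beta Bochner_Integration.integral_sum
        sum_divide_distrib[symmetric] sum_offdiag_pairs)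
qed

end

section \<open>Heat kernel expansion of polynomials\<close>

lemma abs_sub_right_limit_le:
  fixes u v :: "real \<Rightarrow> real"
  assumes der: "\<And>s. s > 0 \<Longrightarrow> (u has_real_derivative v s) (at s)"
    and lim: "(u \<longlongrightarrow> u0) (at_right 0)"
    and bnd: "\<And>s. 0 < s \<Longrightarrow> s \<le> T \<Longrightarrow> \<bar>v s\<bar> \<le> B"
    and t: "0 < t" "t \<le> T"
  shows "\<bar>u t - u0\<bar> \<le> t * B"
proof -
  have B: "0 \<le> B" using bnd[OF t] by linarith
  have "\<bar>u t - u s\<bar> \<le> t * B" if s: "0 < s" "s < t" for s
  proof -
    obtain z where z: "s < z" "z < t" "u t - u s = (t - s) * v z"
      using MVT2[OF s(2), of u v] der s by force
    have "\<bar>v z\<bar> \<le> B" using bnd[of z] z s t by auto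
    hence "\<bar>u t - u s\<bar> \<le> (t - s) * B" using z s by (simp add: abs_mult mult_left_mono)
    also have "\<dots> \<le> t * B" using B s by (simp add: mult_right_mono)
    finally show ?thesis .
  qed
  hence near_0: "eventually (\<lambda>s. \<bar>u t - u s\<bar> \<le> t * B) (at_right 0)"
    unfolding eventually_at_right_field using t by (intro exI[of _ t]) auto
  have "((\<lambda>s. \<bar>u t - u s\<bar>) \<longlongrightarrow> \<bar>u t - u0\<bar>) (at_right 0)"
    by (intro tendsto_intros lim)
  from tendsto_upperbound[OF this near_0] show ?thesis by simp
qed

lemma abs_sub_right_limit_linear_le:
  fixes u v :: "real \<Rightarrow> real"
  assumes der: "\<And>s. s > 0 \<Longrightarrow> (u has_real_derivative v s) (at s)"
    and lim: "(u \<longlongrightarrow> u0) (at_right 0)"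
    and bnd: "\<And>s. 0 < s \<Longrightarrow> \<bar>v s - v0\<bar> \<le> s * B"
    and t: "0 < t"
  shows "\<bar>u t - u0 - t * v0\<bar> \<le> t^2 * B"
proof -
  have "0 \<le> t * B" using bnd[OF t] by linarith
  hence B: "0 \<le> B" using t by (simp add: zero_le_mult_iff)
  have "\<bar>(u t - t * v0) - (u0 - 0 * v0)\<bar> \<le> t * (t * B)"
  proof (rule abs_sub_right_limit_le[where v="\<lambda>s. v s - v0" and T=t])
    show "((\<lambda>s. u s - s * v0) has_real_derivative v s - v0) (at s)" if "s > 0" for s
      using der[OF that] by (auto intro!: derivative_eq_intros)
    show "((\<lambda>s. u s - s * v0) \<longlongrightarrow> u0 - 0 * v0) (at_right 0)"
      by (intro tendsto_intros lim)
    show "\<bar>v s - v0\<bar> \<le> t * B" if "0 < s" "s \<le> t" for s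
      using bnd[of s] that B by (meson mult_right_mono order_trans)
  qed (use t in auto)
  thus ?thesis by (simp add: power2_eq_square algebra_simps)
qed

lemma abs_cube_le_sq_pow4:
  fixes d s :: real
  assumes "s > 0"
  shows "\<bar>d\<bar>^3 \<le> s/2 * d^2 + d^4 / (2 * s)"
proof -
  have "0 \<le> \<bar>d\<bar>^2 * (s - \<bar>d\<bar>)^2" by simp
  hence "2 * s * \<bar>d\<bar>^3 \<le> s^2 * d^2 + d^4"
    by (simp add: power2_eq_square power3_eq_cube power4_eq_xxxx algebra_simps)
  thus ?thesis using assms by (simp add: field_simps power2_eq_square)
qed

text \<open>The conditional moment \<open>E[h(W' - W) | O = x]\<close> after running the heat kernel for time \<open>t\<close>.\<close>
definition increment_moment ::
    "(real^'n::finite^'n) measure \<Rightarrow> (real \<Rightarrow> real^'n^'n \<Rightarrow> real^'n^'n \<Rightarrow> real) \<Rightarrow>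
     real^'n^'n \<Rightarrow> (real \<Rightarrow> real) \<Rightarrow> real \<Rightarrow> real^'n^'n \<Rightarrow> real" where
  "increment_moment M K A h t x = (\<integral>y. h (trace (A ** y) - trace (A ** x)) * K t x y \<partial>M)"

context
  fixes M :: "(real^'n::finite^'n) measure"
    and K :: "real \<Rightarrow> real^'n^'n \<Rightarrow> real^'n^'n \<Rightarrow> real"
  assumes haar: "haar_measure M" and hk: "heat_kernel M K"
begin

lemma heat_kernel_nonneg: "t > 0 \<Longrightarrow> x \<in> Orth \<Longrightarrow> y \<in> Orth \<Longrightarrow> K t x y \<ge> 0"
  using hk unfolding heat_kernel_def by blast

lemma heat_kernel_integrable: "t > 0 \<Longrightarrow> x \<in> Orth \<Longrightarrow> integrable M (K t x)"
  using hk unfolding heat_kernel_def by blast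

lemma heat_kernel_integral: "t > 0 \<Longrightarrow> x \<in> Orth \<Longrightarrow> (\<integral>y. K t x y \<partial>M) = 1"
  using hk unfolding heat_kernel_def by blast

lemma heat_kernel_measurable: "t > 0 \<Longrightarrow> (\<lambda>(x,y). K t x y) \<in> borel_measurable (M \<Otimes>\<^sub>M M)"
  using hk unfolding heat_kernel_def by blast

lemma integrable_heat_kernel_mult:
  assumes "entry_poly \<phi>" "t > 0" "x \<in> Orth"
  shows "integrable M (\<lambda>y. K t x y * \<phi> y)"
proof -
  obtain B where B: "\<forall>Q\<in>Orth. \<bar>\<phi> Q\<bar> \<le> B" using entry_poly_bounded_on_Orth[OF assms(1)] by blast
  show ?thesis
  proof (rule Bochner_Integration.integrable_bound)
    show "integrable M (\<lambda>y. B * K t x y)" using heat_kernel_integrable[OF assms(2,3)] by simp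
    show "(\<lambda>y. K t x y * \<phi> y) \<in> borel_measurable M"
      using borel_measurable_integrable[OF heat_kernel_integrable[OF assms(2,3)]]
        entry_poly_haar_measurable[OF haar assms(1)]
      by measurable
    show "AE y in M. norm (K t x y * \<phi> y) \<le> norm (B * K t x y)"
      using AE_haar_Orth[OF haar]
    proof eventually_elim
      case (elim y)
      have "0 \<le> K t x y" using heat_kernel_nonneg[OF assms(2,3) elim] .
      moreover have "\<bar>\<phi> y\<bar> \<le> B" using B elim by blast
      ultimately have "\<bar>K t x y * \<phi> y\<bar> \<le> B * K t x y"
        by (simp add: abs_mult mult_left_mono mult.commute[of B])
      thus ?case by simp
    qed
  qed
qed

lemma abs_heat_integral_le:
  assumes "entry_poly \<phi>" "t > 0" "x \<in> Orth" "\<forall>Q\<in>Orth. \<bar>\<phi> Q\<bar> \<le> B"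
  shows "\<bar>\<integral>y. K t x y * \<phi> y \<partial>M\<bar> \<le> B"
proof -
  have "\<bar>\<integral>y. K t x y * \<phi> y \<partial>M\<bar> \<le> (\<integral>y. \<bar>K t x y * \<phi> y\<bar> \<partial>M)"
    by (rule integral_abs_bound)
  also have "\<dots> \<le> (\<integral>y. B * K t x y \<partial>M)"
  proof (rule integral_mono_AE)
    show "integrable M (\<lambda>y. \<bar>K t x y * \<phi> y\<bar>)"
      using integrable_heat_kernel_mult[OF assms(1-3)] by simp
    show "integrable M (\<lambda>y. B * K t x y)" using heat_kernel_integrable[OF assms(2,3)] by simp
    show "AE y in M. \<bar>K t x y * \<phi> y\<bar> \<le> B * K t x y"
      using AE_haar_Orth[OF haar]
    proof eventually_elim
      case (elim y)
      have "0 \<le> K t x y" using heat_kernel_nonneg[OF assms(2,3) elim] .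
      moreover have "\<bar>\<phi> y\<bar> \<le> B" using assms(4) elim by blast
      ultimately show ?case by (simp add: abs_mult mult_left_mono mult.commute[of B])
    qed
  qed
  also have "\<dots> = B" using heat_kernel_integral[OF assms(2,3)] by simp
  finally show ?thesis .
qed

lemma heat_equation_entry_poly:
  assumes "entry_poly \<phi>" "x \<in> Orth"
  shows "\<forall>t>0. ((\<lambda>s. \<integral>y. K s x y * \<phi> y \<partial>M) has_real_derivative
                  (\<integral>y. K t x y * laplacian \<phi> y \<partial>M)) (at t)"
    and "((\<lambda>s. \<integral>y. K s x y * \<phi> y \<partial>M) \<longlongrightarrow> \<phi> x) (at_right 0)"
  using assms(1) unfolding atomize_conj
proof induction
  case (entry_poly_monomial f)
  thus ?case using hk assms(2) unfolding heat_kernel_def by blast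
next
  case (entry_poly_add f g)
  let ?U = "\<lambda>h s. \<integral>y. K s x y * h y \<partial>M"
  have U_add: "?U (\<lambda>y. f y + g y) s = ?U f s + ?U g s" if "s > 0" for s
    using integrable_heat_kernel_mult[OF entry_poly_add.hyps(1) that assms(2)]
      integrable_heat_kernel_mult[OF entry_poly_add.hyps(2) that assms(2)]
    by (simp add: distrib_left)
  have U_laplacian_add: "?U (laplacian (\<lambda>y. f y + g y)) s = ?U (laplacian f) s + ?U (laplacian g) s"
    if "s > 0" for s
    using integrable_heat_kernel_mult[OF entry_poly_laplacian[OF entry_poly_add.hyps(1)] that assms(2)]
      integrable_heat_kernel_mult[OF entry_poly_laplacian[OF entry_poly_add.hyps(2)] that assms(2)]
    by (simp add: laplacian_add[OF entry_poly_add.hyps] distrib_left)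
  show ?case
  proof (intro conjI allI impI)
    fix t :: real
    assume t: "t > 0"
    have "((\<lambda>s. ?U f s + ?U g s) has_real_derivative ?U (laplacian f) t + ?U (laplacian g) t) (at t)"
      using entry_poly_add.IH t by (intro DERIV_add) auto
    hence "(?U (\<lambda>y. f y + g y) has_real_derivative ?U (laplacian f) t + ?U (laplacian g) t) (at t)"
      by (rule has_field_derivative_transform_within_open[where S="{0<..}"]) (use t U_add in auto)
    thus "(?U (\<lambda>y. f y + g y) has_real_derivative ?U (laplacian (\<lambda>y. f y + g y)) t) (at t)"
      using U_laplacian_add[OF t] by simp
  next
    have "((\<lambda>s. ?U f s + ?U g s) \<longlongrightarrow> f x + g x) (at_right 0)"
      using entry_poly_add.IH by (intro tendsto_add) auto
    moreover have "eventually (\<lambda>s. ?U f s + ?U g s = ?U (\<lambda>y. f y + g y) s) (at_right 0)"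
      by (rule eventually_mono[OF eventually_at_right_less]) (simp add: U_add)
    ultimately show "(?U (\<lambda>y. f y + g y) \<longlongrightarrow> f x + g x) (at_right 0)"
      using tendsto_cong by fastforce
  qed
next
  case (entry_poly_scale f c)
  let ?U = "\<lambda>h s. \<integral>y. K s x y * h y \<partial>M"
  have U_scale: "?U (\<lambda>y. c * f y) s = c * ?U f s" for s
    by (simp add: mult.left_commute)
  have U_laplacian_scale: "?U (laplacian (\<lambda>y. c * f y)) s = c * ?U (laplacian f) s" for s
    by (simp add: laplacian_scale[OF entry_poly_scale.hyps] mult.left_commute)
  show ?case
  proof (intro conjI allI impI)
    fix t :: real
    assume "t > 0"
    hence "((\<lambda>s. c * ?U f s) has_real_derivative c * ?U (laplacian f) t) (at t)"
      using entry_poly_scale.IH by (intro DERIV_cmult) auto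
    thus "(?U (\<lambda>y. c * f y) has_real_derivative ?U (laplacian (\<lambda>y. c * f y)) t) (at t)"
      by (simp only: U_scale U_laplacian_scale)
  next
    have "((\<lambda>s. c * ?U f s) \<longlongrightarrow> c * f x) (at_right 0)"
      using entry_poly_scale.IH by (intro tendsto_mult_left) auto
    thus "(?U (\<lambda>y. c * f y) \<longlongrightarrow> c * f x) (at_right 0)"
      by (simp only: U_scale)
  qed
qed

text \<open>The heat equation applied to \<open>\<Delta>\<phi>\<close> bounds the derivative of \<open>e\<^sup>t\<^sup>\<Delta>\<phi>(x)\<close> near \<open>\<Delta>\<phi>(x)\<close>.\<close>
lemma heat_taylor_entry_poly:
  assumes "entry_poly \<phi>" "x \<in> Orth" "\<forall>Q\<in>Orth. \<bar>laplacian (laplacian \<phi>) Q\<bar> \<le> B" "t > 0"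
  shows "\<bar>(\<integral>y. K t x y * \<phi> y \<partial>M) - \<phi> x - t * laplacian \<phi> x\<bar> \<le> t^2 * B"
proof (rule abs_sub_right_limit_linear_le[where v="\<lambda>s. \<integral>y. K s x y * laplacian \<phi> y \<partial>M"])
  have \<Delta>\<phi>: "entry_poly (laplacian \<phi>)" by (rule entry_poly_laplacian[OF assms(1)])
  show "\<bar>(\<integral>y. K s x y * laplacian \<phi> y \<partial>M) - laplacian \<phi> x\<bar> \<le> s * B" if "s > 0" for s
    using heat_equation_entry_poly[OF \<Delta>\<phi> assms(2)] that
      abs_heat_integral_le[OF entry_poly_laplacian[OF \<Delta>\<phi>] _ assms(2,3)]
    by (intro abs_sub_right_limit_le[where T=s]) auto
qed (use heat_equation_entry_poly[OF assms(1,2)] assms(4) in auto)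

lemma increment_moment_taylor:
  fixes A :: "real^'n^'n"
  assumes "k \<ge> 1"
  shows "\<exists>C. \<forall>x\<in>Orth. \<forall>t>0.
    \<bar>increment_moment M K A (\<lambda>d. d^k) t x
       - t * laplacian (\<lambda>y. (trace (A ** y) - trace (A ** x))^k) x\<bar> \<le> t^2 * C"
proof -
  obtain C where C: "\<forall>x\<in>Orth. \<forall>Q\<in>Orth.
      \<bar>laplacian (laplacian (\<lambda>y. (trace (A ** y) - trace (A ** x))^k)) Q\<bar> \<le> C"
    using laplacian_laplacian_trace_increment_pow_bounded by blast
  have "\<bar>increment_moment M K A (\<lambda>d. d^k) t x
          - t * laplacian (\<lambda>y. (trace (A ** y) - trace (A ** x))^k) x\<bar> \<le> t^2 * C"
    if x: "x \<in> Orth" and t: "t > 0" for x t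
  proof -
    have "entry_poly (\<lambda>y. (trace (A ** y) - trace (A ** x))^k)"
      by (intro entry_poly_power entry_poly_diff entry_poly_trace_mult entry_poly_const)
    from heat_taylor_entry_poly[OF this x bspec[OF C x] t]
    show ?thesis using assms by (simp add: increment_moment_def mult.commute power_0_left)
  qed
  thus ?thesis by blast
qed

lemma increment_moment_sq_taylor:
  "\<exists>C. \<forall>x\<in>Orth. \<forall>t>0.
     \<bar>increment_moment M K A (\<lambda>d. d^2) t x - t * trace_grad_sq A x\<bar> \<le> t^2 * C"
  using increment_moment_taylor[of 2 A] by (simp add: laplacian_trace_increment_sq)

lemma increment_moment_pow4_bound:
  "\<exists>C. \<forall>x\<in>Orth. \<forall>t>0. \<bar>increment_moment M K A (\<lambda>d. d^4) t x\<bar> \<le> t^2 * C"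
  using increment_moment_taylor[of 4 A] by (simp add: laplacian_trace_increment_pow4)

lemma integrable_increment_moment_pow:
  assumes "x \<in> Orth" "t > 0"
  shows "integrable M (\<lambda>y. (trace (A ** y) - trace (A ** x))^k * K t x y)"
  using integrable_heat_kernel_mult[OF _ assms(2,1), of "\<lambda>y. (trace (A ** y) - trace (A ** x))^k"]
  by (simp add: mult.commute entry_poly_power entry_poly_diff entry_poly_trace_mult entry_poly_const)

lemma increment_moment_abs_cube_le:
  assumes x: "x \<in> Orth" and t: "t > 0" and s: "s > 0"
  shows "increment_moment M K A (\<lambda>d. \<bar>d\<bar>^3) t x
    \<le> s/2 * increment_moment M K A (\<lambda>d. d^2) t x + increment_moment M K A (\<lambda>d. d^4) t x / (2 * s)"
proof -
  let ?d = "\<lambda>y. trace (A ** y) - trace (A ** x)"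
  have "(\<lambda>y. \<bar>?d y\<bar>^3 * K t x y) \<in> borel_measurable M"
    using entry_poly_haar_measurable[OF haar entry_poly_trace_mult]
      borel_measurable_integrable[OF heat_kernel_integrable[OF t x]]
    by measurable
  hence "integrable M (\<lambda>y. \<bar>?d y\<bar>^3 * K t x y)"
    using AE_haar_Orth[OF haar] heat_kernel_nonneg[OF t x]
    by (intro Bochner_Integration.integrable_bound[OF integrable_increment_moment_pow[OF x t, where k=3]])
       (auto elim!: eventually_mono simp: abs_mult power_abs)
  hence "(\<integral>y. \<bar>?d y\<bar>^3 * K t x y \<partial>M)
      \<le> (\<integral>y. s/2 * (?d y^2 * K t x y) + (?d y^4 * K t x y) / (2 * s) \<partial>M)"
  proof (rule integral_mono_AE)
    show "integrable M (\<lambda>y. s/2 * (?d y^2 * K t x y) + (?d y^4 * K t x y) / (2 * s))"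
      using integrable_increment_moment_pow[OF x t] by simp
    show "AE y in M. \<bar>?d y\<bar>^3 * K t x y \<le> s/2 * (?d y^2 * K t x y) + (?d y^4 * K t x y) / (2 * s)"
      using AE_haar_Orth[OF haar]
    proof eventually_elim
      case (elim y)
      have "\<bar>?d y\<bar>^3 * K t x y \<le> (s/2 * ?d y^2 + ?d y^4 / (2 * s)) * K t x y"
        by (rule mult_right_mono[OF abs_cube_le_sq_pow4[OF s] heat_kernel_nonneg[OF t x elim]])
      thus ?case by (simp add: algebra_simps)
    qed
  qed
  thus ?thesis
    using integrable_increment_moment_pow[OF x t] by (simp add: increment_moment_def)
qed

lemma increment_moment_abs_cube_bound:
  "\<exists>C. \<forall>x\<in>Orth. \<forall>t. 0 < t \<longrightarrow> t \<le> 1 \<longrightarrow>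
     \<bar>increment_moment M K A (\<lambda>d. \<bar>d\<bar>^3) t x\<bar> \<le> t powr (3/2) * C"
proof -
  obtain C2 where C2: "\<forall>x\<in>Orth. \<forall>t>0.
      \<bar>increment_moment M K A (\<lambda>d. d^2) t x - t * trace_grad_sq A x\<bar> \<le> t^2 * C2"
    using increment_moment_sq_taylor by blast
  obtain C4 where C4: "\<forall>x\<in>Orth. \<forall>t>0. \<bar>increment_moment M K A (\<lambda>d. d^4) t x\<bar> \<le> t^2 * C4"
    using increment_moment_pow4_bound by blast
  obtain G where G: "\<forall>Q\<in>Orth. \<bar>trace_grad_sq A Q\<bar> \<le> G"
    using entry_poly_bounded_on_Orth[OF entry_poly_trace_grad_sq] by blast
  have "\<bar>increment_moment M K A (\<lambda>d. \<bar>d\<bar>^3) t x\<bar> \<le> t powr (3/2) * (\<bar>G\<bar> + \<bar>C2\<bar> + \<bar>C4\<bar>)"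
    if x: "x \<in> Orth" and t: "0 < t" "t \<le> 1" for x t
  proof -
    define s where "s = sqrt t"
    have s: "s > 0" "s * s = t" using t by (simp_all add: s_def)
    have m3: "0 \<le> increment_moment M K A (\<lambda>d. \<bar>d\<bar>^3) t x"
      unfolding increment_moment_def using AE_haar_Orth[OF haar] heat_kernel_nonneg[OF t(1) x]
      by (intro integral_nonneg_AE) (auto elim!: eventually_mono)
    have m2: "increment_moment M K A (\<lambda>d. d^2) t x \<le> t * (\<bar>G\<bar> + \<bar>C2\<bar>)"
    proof -
      have "t^2 * C2 \<le> t^2 * \<bar>C2\<bar>" by (simp add: mult_left_mono)
      also have "\<dots> \<le> t * \<bar>C2\<bar>" using t by (simp add: power2_eq_square mult_right_mono)
      finally have "t^2 * C2 \<le> t * \<bar>C2\<bar>" .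
      moreover have "t * trace_grad_sq A x \<le> t * \<bar>G\<bar>"
        using G x t by (intro mult_left_mono) (auto simp: abs_le_iff)
      moreover have "increment_moment M K A (\<lambda>d. d^2) t x - t * trace_grad_sq A x \<le> t^2 * C2"
        using C2 x t by (blast dest: abs_le_D1)
      ultimately show ?thesis by (simp add: algebra_simps)
    qed
    have m4: "increment_moment M K A (\<lambda>d. d^4) t x \<le> t^2 * \<bar>C4\<bar>"
    proof -
      have "increment_moment M K A (\<lambda>d. d^4) t x \<le> t^2 * C4"
        using C4 x t by (blast dest: abs_le_D1)
      also have "\<dots> \<le> t^2 * \<bar>C4\<bar>" by (simp add: mult_left_mono)
      finally show ?thesis .
    qed
    have "\<bar>increment_moment M K A (\<lambda>d. \<bar>d\<bar>^3) t x\<bar>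
        \<le> s/2 * increment_moment M K A (\<lambda>d. d^2) t x
          + increment_moment M K A (\<lambda>d. d^4) t x / (2 * s)"
      using increment_moment_abs_cube_le[OF x t(1) s(1)] m3 by simp
    also have "\<dots> \<le> s/2 * (t * (\<bar>G\<bar> + \<bar>C2\<bar>)) + t^2 * \<bar>C4\<bar> / (2 * s)"
      using s(1) by (intro add_mono mult_left_mono divide_right_mono m2 m4) simp_all
    also have "\<dots> = t * s * ((\<bar>G\<bar> + \<bar>C2\<bar>) / 2 + \<bar>C4\<bar> / 2)"
      using s by (auto simp: field_simps power2_eq_square)
    also have "\<dots> \<le> t * s * (\<bar>G\<bar> + \<bar>C2\<bar> + \<bar>C4\<bar>)"
      using s t by (intro mult_left_mono) (simp_all add: field_simps)
    also have "t * s = t powr (3/2)"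
      using t powr_add[of t 1 "1/2"] by (simp add: s_def powr_half_sqrt)
    finally show ?thesis .
  qed
  thus ?thesis by blast
qed

lemma increment_moment_measurable:
  assumes "t > 0" "h \<in> borel_measurable borel"
  shows "increment_moment M K A h t \<in> borel_measurable M"
proof -
  have [measurable]: "(\<lambda>y. trace (A ** y)) \<in> borel_measurable M"
    by (rule entry_poly_haar_measurable[OF haar entry_poly_trace_mult])
  have [measurable]: "(\<lambda>(x,y). K t x y) \<in> borel_measurable (M \<Otimes>\<^sub>M M)"
    by (rule heat_kernel_measurable[OF assms(1)])
  have [measurable]: "h \<in> borel_measurable borel" by (rule assms(2))
  have "(\<lambda>(x,y). h (trace (A ** y) - trace (A ** x)) * K t x y) \<in> borel_measurable (M \<Otimes>\<^sub>M M)"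
    by measurable
  thus ?thesis
    unfolding increment_moment_def[abs_def]
    by (rule sigma_finite_measure.borel_measurable_lebesgue_integral[OF
          prob_space_imp_sigma_finite[OF haar_prob_space[OF haar]]])
qed

lemma abs_integral_increment_moment_diff_le:
  assumes t: "t > 0" and h: "h \<in> borel_measurable borel" and g: "entry_poly g"
    and bound: "\<forall>x\<in>Orth. \<bar>increment_moment M K A h t x - g x\<bar> \<le> b"
  shows "\<bar>(\<integral>x. increment_moment M K A h t x \<partial>M) - (\<integral>x. g x \<partial>M)\<bar> \<le> b"
proof -
  interpret prob_space M by (rule haar_prob_space[OF haar])
  let ?D = "\<lambda>x. increment_moment M K A h t x - g x"
  have D_meas: "?D \<in> borel_measurable M"
    using increment_moment_measurable[OF t h] entry_poly_haar_measurable[OF haar g] by measurable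
  have D_bound: "AE x in M. \<bar>?D x\<bar> \<le> b"
    using AE_haar_Orth[OF haar] bound by (auto elim!: eventually_mono)
  have D_int: "integrable M ?D"
    by (rule integrable_const_bound[where B=b]) (use D_meas D_bound in auto)
  have "integrable M (\<lambda>x. ?D x + g x)"
    by (intro Bochner_Integration.integrable_add D_int entry_poly_haar_integrable[OF haar g])
  hence "(\<integral>x. increment_moment M K A h t x \<partial>M) - (\<integral>x. g x \<partial>M) = (\<integral>x. ?D x \<partial>M)"
    using entry_poly_haar_integrable[OF haar g] by simp
  also have "\<bar>\<dots>\<bar> \<le> (\<integral>x. b \<partial>M)"
    using D_bound D_int by (intro order_trans[OF integral_abs_bound] integral_mono_AE) auto
  finally show ?thesis by (simp add: prob_space)
qed

lemma integral_increment_moment_sq: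
  assumes "trace (A ** transpose A) = real CARD('n)"
  shows "\<exists>C. \<forall>t>0. \<bar>(\<integral>x. increment_moment M K A (\<lambda>d. d^2) t x \<partial>M)
                        - t * (real CARD('n) - 1)\<bar> \<le> t^2 * C"
proof -
  obtain C where C: "\<forall>x\<in>Orth. \<forall>t>0.
      \<bar>increment_moment M K A (\<lambda>d. d^2) t x - t * trace_grad_sq A x\<bar> \<le> t^2 * C"
    using increment_moment_sq_taylor by blast
  have "\<bar>(\<integral>x. increment_moment M K A (\<lambda>d. d^2) t x \<partial>M) - (\<integral>x. t * trace_grad_sq A x \<partial>M)\<bar>
      \<le> t^2 * C" if "t > 0" for t
    using C that
    by (intro abs_integral_increment_moment_diff_le entry_poly_scale entry_poly_trace_grad_sq)
       (auto simp: measurable)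
  thus ?thesis by (auto simp: haar_integral_trace_grad_sq[OF haar assms])
qed

lemma integral_increment_moment_pow4:
  "\<exists>C. \<forall>t>0. \<bar>\<integral>x. increment_moment M K A (\<lambda>d. d^4) t x \<partial>M\<bar> \<le> t^2 * C"
proof -
  obtain C where "\<forall>x\<in>Orth. \<forall>t>0. \<bar>increment_moment M K A (\<lambda>d. d^4) t x\<bar> \<le> t^2 * C"
    using increment_moment_pow4_bound by blast
  hence "\<bar>(\<integral>x. increment_moment M K A (\<lambda>d. d^4) t x \<partial>M) - (\<integral>x. 0 \<partial>M)\<bar> \<le> t^2 * C"
    if "t > 0" for t
    using that by (intro abs_integral_increment_moment_diff_le entry_poly_const) auto
  thus ?thesis by auto
qed

lemma integral_increment_moment_abs_cube:
  "\<exists>C. \<forall>t. 0 < t \<longrightarrow> t \<le> 1 \<longrightarrow>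
     \<bar>\<integral>x. increment_moment M K A (\<lambda>d. \<bar>d\<bar>^3) t x \<partial>M\<bar> \<le> t powr (3/2) * C"
proof -
  obtain C where "\<forall>x\<in>Orth. \<forall>t. 0 < t \<longrightarrow> t \<le> 1 \<longrightarrow>
      \<bar>increment_moment M K A (\<lambda>d. \<bar>d\<bar>^3) t x\<bar> \<le> t powr (3/2) * C"
    using increment_moment_abs_cube_bound by blast
  hence "\<bar>(\<integral>x. increment_moment M K A (\<lambda>d. \<bar>d\<bar>^3) t x \<partial>M) - (\<integral>x. 0 \<partial>M)\<bar>
      \<le> t powr (3/2) * C" if "0 < t" "t \<le> 1" for t
    using that by (intro abs_integral_increment_moment_diff_le entry_poly_const) auto
  thus ?thesis by auto
qed

end

lemma bigo_at_right_0I: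
  fixes f g :: "real \<Rightarrow> real"
  assumes "\<And>t. 0 < t \<Longrightarrow> t \<le> 1 \<Longrightarrow> \<bar>f t\<bar> \<le> g t * C" and "\<And>t. 0 < t \<Longrightarrow> 0 \<le> g t"
  shows "f \<in> O[at_right 0](g)"
proof (rule bigoI[where c=C])
  have "\<forall>\<^sub>F t in at_right (0::real). 0 < t \<and> t \<le> 1"
    unfolding eventually_at_right_field by (intro exI[of _ 1]) auto
  thus "\<forall>\<^sub>F t in at_right 0. norm (f t) \<le> C * norm (g t)"
    by eventually_elim (use assms in \<open>auto simp: mult.commute\<close>)
qed

theorem mainTheorem7:
  fixes A :: "real^'n::finite^'n"
    and M :: "(real^'n^'n) measure"
    and K :: "real \<Rightarrow> real^'n^'n \<Rightarrow> real^'n^'n \<Rightarrow> real"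
  assumes "CARD('n) \<ge> 4"
    and "trace (A ** transpose A) = real CARD('n)"
    and "haar_measure M"
    and "heat_kernel M K"
  shows "((\<lambda>t. (\<integral>x. (\<integral>y. (trace (A ** y) - trace (A ** x)) ^ 2 * K t x y \<partial>M) \<partial>M)
              - t * (real CARD('n) - 1)) \<in> O[at_right 0](\<lambda>t. t ^ 2) \<and>
         (\<lambda>t. \<integral>x. (\<integral>y. (trace (A ** y) - trace (A ** x)) ^ 4 * K t x y \<partial>M) \<partial>M)
           \<in> O[at_right 0](\<lambda>t. t ^ 2) \<and>
         (\<lambda>t. \<integral>x. (\<integral>y. \<bar>trace (A ** y) - trace (A ** x)\<bar> ^ 3 * K t x y \<partial>M) \<partial>M)
           \<in> O[at_right 0](\<lambda>t. t powr (3/2)))"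
proof -
  obtain C2 where "\<forall>t>0. \<bar>(\<integral>x. increment_moment M K A (\<lambda>d. d^2) t x \<partial>M)
                        - t * (real CARD('n) - 1)\<bar> \<le> t^2 * C2"
    using integral_increment_moment_sq[OF assms(3,4,2)] by blast
  moreover obtain C4 where
    "\<forall>t>0. \<bar>\<integral>x. increment_moment M K A (\<lambda>d. d^4) t x \<partial>M\<bar> \<le> t^2 * C4"
    using integral_increment_moment_pow4[OF assms(3,4)] by blast
  moreover obtain C3 where "\<forall>t. 0 < t \<longrightarrow> t \<le> 1 \<longrightarrow>
      \<bar>\<integral>x. increment_moment M K A (\<lambda>d. \<bar>d\<bar>^3) t x \<partial>M\<bar> \<le> t powr (3/2) * C3"
    using integral_increment_moment_abs_cube[OF assms(3,4)] by blast
  ultimately show ?thesis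
    unfolding increment_moment_def by (intro conjI bigo_at_right_0I) auto
qed

end
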